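(* Let $\mathscr{X}$ be a complex Banach space and $\mathscr{M}_1,\mathscr{M}_2,\mathscr{M}_3$ closed subspaces such that $\mathscr{X}=\mathscr{M}_i\oplus\mathscr{M}_j$ for all $i\neq j$. Let $V_1\colon\mathscr{M}_2\to\mathscr{M}_3$, $V_2\colon\mathscr{M}_1\to\mathscr{M}_3$, $V_3\colon\mathscr{M}_1\to\mathscr{M}_2$ be isomorphisms with $\mathscr{M}_1=\{x+V_1x:x\in\mathscr{M}_2\}$, $\mathscr{M}_2=\{x+V_2x:x\in\mathscr{M}_1\}$, $\mathscr{M}_3=\{x+V_3x:x\in\mathscr{M}_1\}$, and define $W_1,W_2,W_3\in\mathcal{B}(\mathscr{X})$ by $W_1(x_2+x_3)=V_1^{-1}x_3+V_1x_2$ ($x_2\in\mathscr{M}_2,x_3\in\mathscr{M}_3$), $W_2(x_1+x_3)=V_2^{-1}x_3+V_2x_1$ ($x_1\in\mathscr{M}_1,x_3\in\mathscr{M}_3$), $W_3(x_1+x_2)=V_3^{-1}x_2+V_3x_1$ ($x_1\in\mathscr{M}_1,x_2\in\mathscr{M}_2$). Let $\mathfrak{D}=\{\{0\},\mathscr{M}_1,\mathscr{M}_2,\mathscr{X}\}$ and $\mathfrak{T}=\{\{0\},\mathscr{M}_1,\mathscr{M}_2,\mathscr{M}_3,\mathscr{X}\}$. Then $\mathrm{Col}(\mathfrak{D})=\mathrm{Grp}(\mathrm{Alg}(\mathfrak{D}))\rtimes\mathcal{O}(\mathfrak{D})$ and $\mathrm{Col}(\mathfrak{T})=\mathrm{Grp}(\mathrm{Alg}(\mathfrak{T}))\rtimes\mathcal{O}(\mathfrak{T})$,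 where $\mathcal{O}(\mathfrak{D})=\{I,W_3\}$ and $\mathcal{O}(\mathfrak{T})=\{I,W_1,W_2,W_3,W_1W_2,W_2W_1\}$.
   Context: $\mathscr{X}=\mathscr{M}\oplus\mathscr{N}$ means $\mathscr{M}\cap\mathscr{N}=\{0\}$ and $\mathscr{M}+\mathscr{N}=\mathscr{X}$. $\mathrm{Alg}(\mathfrak{F})$ is the set of bounded operators leaving every subspace of $\mathfrak{F}$ invariant; $\mathrm{Grp}(\mathcal{A})$ is the group of invertible $S\in\mathcal{A}$ with $S^{-1}\in\mathcal{A}$. $\mathrm{Col}(\mathfrak{F})$ is the group of invertible $S\in\mathcal{B}(\mathscr{X})$ such that for every closed subspace $\mathscr{M}$: $\mathscr{M}\in\mathfrak{F}$ iff $S\mathscr{M}\in\mathfrak{F}$. For a subgroup $\mathcal{O}\subseteq\mathrm{Col}(\mathfrak{F})$, the notation $\mathrm{Col}(\mathfrak{F})=\mathrm{Grp}(\mathrm{Alg}(\mathfrak{F}))\rtimes\mathcal{O}$ means $\mathcal{O}$ is a subgroup of $\mathrm{Col}(\mathfrak{F})$ with $\mathrm{Col}(\mathfrak{F})=\{AT:A\in\mathrm{Grp}(\mathrm{Alg}(\mathfrak{F})),T\in\mathcal{O}\}$ and $\mathrm{Grp}(\mathrm{Alg}(\mathfrak{F}))\cap\mathcal{O}=\{I\}$. *)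

theory Defs
  imports "HOL-Analysis.Analysis"
begin

class complex_normed_vector = real_normed_vector +
  fixes scaleC :: "complex \<Rightarrow> 'a \<Rightarrow> 'a"
  assumes scaleC_add_right: "scaleC a (x + y) = scaleC a x + scaleC a y"
    and scaleC_add_left: "scaleC (a + b) x = scaleC a x + scaleC b x"
    and scaleC_scaleC: "scaleC a (scaleC b x) = scaleC (a * b) x"
    and scaleC_one: "scaleC 1 x = x"
    and scaleC_of_real: "scaleC (complex_of_real r) x = scaleR r x"
    and norm_scaleC: "norm (scaleC a x) = cmod a * norm x"

class complex_banach = complex_normed_vector + complete_space

definition cblin :: "('a::complex_normed_vector \<Rightarrow> 'b::complex_normed_vector) \<Rightarrow> bool" where
  "cblin T \<longleftrightarrow> bounded_linear T \<and> (\<forall>c x. T (scaleC c x) = scaleC c (T x))"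

definition csubspace :: "'a::complex_normed_vector set \<Rightarrow> bool" where
  "csubspace M \<longleftrightarrow> 0 \<in> M \<and> (\<forall>x\<in>M. \<forall>y\<in>M. x + y \<in> M) \<and> (\<forall>c. \<forall>x\<in>M. scaleC c x \<in> M)"

definition closed_csubspace :: "'a::complex_normed_vector set \<Rightarrow> bool" where
  "closed_csubspace M \<longleftrightarrow> closed M \<and> csubspace M"

definition direct_sum :: "'a::complex_normed_vector set \<Rightarrow> 'a set \<Rightarrow> bool" where
  "direct_sum M N \<longleftrightarrow> M \<inter> N = {0} \<and> {x + y | x y. x \<in> M \<and> y \<in> N} = UNIV"

text \<open>Topological isomorphism from the subspace \<open>M\<close> onto the subspace \<open>N\<close>
  (only the values of \<open>V\<close> on \<open>M\<close> matter).\<close>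
definition iso_on :: "'a::complex_normed_vector set \<Rightarrow> 'a set \<Rightarrow> ('a \<Rightarrow> 'a) \<Rightarrow> bool" where
  "iso_on M N V \<longleftrightarrow> bij_betw V M N
     \<and> (\<forall>x\<in>M. \<forall>y\<in>M. V (x + y) = V x + V y)
     \<and> (\<forall>c. \<forall>x\<in>M. V (scaleC c x) = scaleC c (V x))
     \<and> (\<exists>K. \<forall>x\<in>M. norm (V x) \<le> K * norm x)
     \<and> (\<exists>K. \<forall>y\<in>N. norm (inv_into M V y) \<le> K * norm y)"

definition Alg :: "'a::complex_normed_vector set set \<Rightarrow> ('a \<Rightarrow> 'a) set" where
  "Alg F = {T. cblin T \<and> (\<forall>M\<in>F. T ` M \<subseteq> M)}"

definition Grp :: "('a \<Rightarrow> 'a) set \<Rightarrow> ('a \<Rightarrow> 'a) set" where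
  "Grp A = {S \<in> A. bij S \<and> inv S \<in> A}"

definition Col :: "'a::complex_normed_vector set set \<Rightarrow> ('a \<Rightarrow> 'a) set" where
  "Col F = {S. cblin S \<and> bij S \<and> cblin (inv S) \<and>
      (\<forall>M. closed_csubspace M \<longrightarrow> (M \<in> F \<longleftrightarrow> S ` M \<in> F))}"

definition semidirect_Col :: "'a::complex_normed_vector set set \<Rightarrow> ('a \<Rightarrow> 'a) set \<Rightarrow> bool" where
  "semidirect_Col F Og \<longleftrightarrow>
     Og \<subseteq> Col F \<and> id \<in> Og \<and> (\<forall>S\<in>Og. \<forall>T\<in>Og. S \<circ> T \<in> Og) \<and> (\<forall>S\<in>Og. inv S \<in> Og)
     \<and> Col F = {A \<circ> T | A T. A \<in> Grp (Alg F) \<and> T \<in> Og}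
     \<and> Grp (Alg F) \<inter> Og = {id}"

end

(*
  If M and N are complementary closed subspaces of a Banach space, every x = m + n can be
  split with norm m + norm n bounded by a multiple of norm x: by Baire's theorem the closure of
  the set of sums with norm m + norm n <= r has nonempty interior for some r, and successive
  halving of the error, as in the open mapping theorem, removes the closure. Hence each W_i, which is the identity on M_i
  (the graph of V_i) and exchanges the two other subspaces, is a bounded involution.

  An operator that fixes M3 pointwise and exchanges M1 and M2 must be W3. Both W1 W2 W1 and
  W2 W1 W2 are such operators, so W1 and W2 generate a copy of S3 containing W3, which acts
  on {M1, M2, M3} by all six permutations; likewise {I, W3} acts on {M1, M2} by both.
  A collineation S permutes the nontrivial members of the lattice, so S agrees on the lattice
  with exactly one T of the group O, and S T^-1 belongs to Alg: Col = Grp(Alg) O, and the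
  factors meet only in I because O acts faithfully.
*)
theory Submission
  imports Defs
begin

instance complex_banach \<subseteq> banach ..

section \<open>Bounded decompositions in Banach spaces\<close>

definition bounded_sums :: "'a::real_normed_vector set \<Rightarrow> 'a set \<Rightarrow> real \<Rightarrow> 'a set" where
  "bounded_sums M N r = {m + n | m n. m \<in> M \<and> n \<in> N \<and> norm m + norm n \<le> r}"

lemma zero_in_bounded_sums:
  assumes "subspace M" "subspace N" "r \<ge> 0"
  shows "0 \<in> bounded_sums M N r"
proof -
  have "(0::'a) = 0 + 0 \<and> 0 \<in> M \<and> 0 \<in> N \<and> norm (0::'a) + norm (0::'a) \<le> r"
    using assms by (simp add: subspace_0)
  then show ?thesis
    unfolding bounded_sums_def by blast
qed

lemma bounded_sums_diff:
  assumes "subspace M" "subspace N" "a \<in> bounded_sums M N r" "b \<in> bounded_sums M N s"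
  shows "a - b \<in> bounded_sums M N (r + s)"
proof -
  obtain m n m' n' where "a = m + n" "b = m' + n'" "m \<in> M" "n \<in> N" "m' \<in> M" "n' \<in> N"
    "norm m + norm n \<le> r" "norm m' + norm n' \<le> s"
    using assms(3,4) by (auto simp: bounded_sums_def)
  moreover have "norm (m - m') + norm (n - n') \<le> r + s"
    using calculation norm_triangle_ineq4[of m m'] norm_triangle_ineq4[of n n'] by linarith
  ultimately show ?thesis
    using assms(1,2) unfolding bounded_sums_def
    by (intro CollectI exI[of _ "m - m'"] exI[of _ "n - n'"]) (auto simp: subspace_diff)
qed

lemma bounded_sums_scaleR:
  assumes "subspace M" "subspace N" "a \<in> bounded_sums M N r"
  shows "t *\<^sub>R a \<in> bounded_sums M N (\<bar>t\<bar> * r)"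
proof -
  obtain m n where "a = m + n" "m \<in> M" "n \<in> N" "norm m + norm n \<le> r"
    using assms(3) by (auto simp: bounded_sums_def)
  moreover have "norm (t *\<^sub>R m) + norm (t *\<^sub>R n) \<le> \<bar>t\<bar> * r"
    using calculation(4) by (simp add: distrib_left[symmetric] mult_left_mono)
  ultimately show ?thesis
    using assms(1,2) unfolding bounded_sums_def
    by (intro CollectI exI[of _ "t *\<^sub>R m"] exI[of _ "t *\<^sub>R n"])
      (auto simp: subspace_scale scaleR_add_right)
qed

lemma ball_in_closure_bounded_sums:
  fixes M N :: "'a::banach set"
  assumes "\<And>x. \<exists>m\<in>M. \<exists>n\<in>N. x = m + n"
  obtains r y e where "e > 0" "ball y e \<subseteq> closure (bounded_sums M N r)"
proof -
  have "(\<Union>k. closure (bounded_sums M N (real k))) = UNIV"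
  proof (intro set_eqI iffI)
    fix x :: 'a
    obtain m n where "m \<in> M" "n \<in> N" "x = m + n"
      using assms by blast
    moreover obtain k :: nat where "norm m + norm n \<le> real k"
      using real_arch_simple by blast
    ultimately have "x \<in> bounded_sums M N (real k)"
      unfolding bounded_sums_def by blast
    then show "x \<in> (\<Union>k. closure (bounded_sums M N (real k)))"
      using closure_subset by blast
  qed simp
  then obtain k where "interior (closure (bounded_sums M N (real k))) \<noteq> {}"
    using Baire_category_alt[of euclidean "range (\<lambda>k. closure (bounded_sums M N (real k)))"]
    by (force simp: completely_metrizable_space_euclidean)
  then obtain y where "y \<in> interior (closure (bounded_sums M N (real k)))"
    by blast
  then show thesis
    using that by (auto simp: mem_interior)
qed

lemma ball_zero_subset_closure_bounded_sums:
  assumes "subspace M" "subspace N" "ball y e \<subseteq> closure (bounded_sums M N r)"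
  shows "ball 0 e \<subseteq> closure (bounded_sums M N (2 * r))"
proof
  fix z :: 'a
  assume "z \<in> ball 0 e"
  then have "norm z < e"
    by simp
  moreover have "e > 0"
    using \<open>norm z < e\<close> norm_ge_zero[of z] by linarith
  ultimately have "y + z \<in> ball y e" "y \<in> ball y e"
    by (simp_all add: dist_norm)
  then have yz: "y + z \<in> closure (bounded_sums M N r)" and y: "y \<in> closure (bounded_sums M N r)"
    using assms(3) by blast+
  show "z \<in> closure (bounded_sums M N (2 * r))"
  proof (unfold closure_approachable, intro allI impI)
    fix d :: real
    assume "d > 0"
    then have "d / 2 > 0"
      by simp
    then obtain a b where ab: "a \<in> bounded_sums M N r" "dist a (y + z) < d / 2"
      "b \<in> bounded_sums M N r" "dist b y < d / 2"
      using yz y unfolding closure_approachable by blast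
    have "a - b \<in> bounded_sums M N (2 * r)"
      using bounded_sums_diff[OF assms(1,2) ab(1,3)] by (simp only: mult_2)
    moreover have "dist (a - b) z < d"
    proof -
      have "a - b - z = (a - (y + z)) - (b - y)"
        by (simp add: algebra_simps)
      then have "dist (a - b) z \<le> dist a (y + z) + dist b y"
        by (metis dist_norm norm_triangle_ineq4)
      then show ?thesis
        using ab(2,4) by linarith
    qed
    ultimately show "\<exists>x\<in>bounded_sums M N (2 * r). dist x z < d"
      by blast
  qed
qed

lemma in_closure_bounded_sums_linear:
  fixes M N :: "'a::banach set"
  assumes "subspace M" "subspace N" "\<And>x. \<exists>m\<in>M. \<exists>n\<in>N. x = m + n"
  obtains c where "c \<ge> 0" "\<And>x. x \<in> closure (bounded_sums M N (c * norm x))"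
proof -
  obtain r y e where e: "e > 0" and ball: "ball y e \<subseteq> closure (bounded_sums M N r)"
    using ball_in_closure_bounded_sums[OF assms(3)] by metis
  have "y \<in> closure (bounded_sums M N r)"
    using ball e by auto
  then have "bounded_sums M N r \<noteq> {}"
    by auto
  then obtain m n :: 'a where "norm m + norm n \<le> r"
    unfolding bounded_sums_def by blast
  then have "r \<ge> 0"
    using norm_ge_zero[of m] norm_ge_zero[of n] by linarith
  have ball0: "ball 0 e \<subseteq> closure (bounded_sums M N (2 * r))"
    by (rule ball_zero_subset_closure_bounded_sums[OF assms(1,2) ball])
  define c where "c = 4 * r / e"
  have "x \<in> closure (bounded_sums M N (c * norm x))" for x
  proof (cases "x = 0")
    case True
    then show ?thesis
      using zero_in_bounded_sums[OF assms(1,2), of 0] closure_subset by auto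
  next
    case False
    define t where "t = e / (2 * norm x)"
    have "t > 0"
      using e False by (simp add: t_def)
    have "t *\<^sub>R x \<in> ball 0 e"
      using e False by (simp add: t_def)
    then have "(1 / t) *\<^sub>R (t *\<^sub>R x) \<in> (*\<^sub>R) (1 / t) ` closure (bounded_sums M N (2 * r))"
      using ball0 by blast
    also have "\<dots> = closure ((*\<^sub>R) (1 / t) ` bounded_sums M N (2 * r))"
      by (rule closure_scaleR)
    also have "\<dots> \<subseteq> closure (bounded_sums M N (\<bar>1 / t\<bar> * (2 * r)))"
      using bounded_sums_scaleR[OF assms(1,2)] by (intro closure_mono) blast
    also have "\<bar>1 / t\<bar> * (2 * r) = c * norm x"
      using e False \<open>t > 0\<close> by (simp add: t_def c_def field_simps)
    finally show ?thesis
      using \<open>t > 0\<close> by simp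
  qed
  moreover have "c \<ge> 0"
    using \<open>r \<ge> 0\<close> e by (simp add: c_def)
  ultimately show thesis
    using that by blast
qed

lemma closed_subspace_suminf_geometric:
  fixes f :: "nat \<Rightarrow> 'a::banach"
  assumes "closed M" "subspace M" "\<And>j. f j \<in> M" "\<And>j. norm (f j) \<le> B * (1 / 2) ^ j"
  shows "summable f" "suminf f \<in> M" "norm (suminf f) \<le> 2 * B"
proof -
  have geom: "summable (\<lambda>j. B * (1 / 2 :: real) ^ j)"
    by (simp add: summable_mult)
  have norms: "summable (\<lambda>j. norm (f j))"
    using summable_norm_comparison_test[OF _ geom] assms(4) by blast
  then show "summable f"
    by (rule summable_norm_cancel)
  then show "suminf f \<in> M"
    using closed_sequentially[OF assms(1) _ summable_LIMSEQ] assms(2,3) by (simp add: subspace_sum)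
  have "norm (suminf f) \<le> (\<Sum>j. norm (f j))"
    by (rule summable_norm[OF norms])
  also have "\<dots> \<le> (\<Sum>j. B * (1 / 2) ^ j)"
    by (rule suminf_le[OF assms(4) norms geom])
  also have "\<dots> = 2 * B"
    by (simp add: suminf_mult suminf_geometric)
  finally show "norm (suminf f) \<le> 2 * B" .
qed

lemma in_bounded_sums_by_halving:
  fixes M N :: "'a::banach set"
  assumes "closed M" "closed N" "subspace M" "subspace N" "c \<ge> 0"
    and pq: "\<And>y. p y \<in> M" "\<And>y. q y \<in> N" "\<And>y. norm (p y) + norm (q y) \<le> c * norm y"
    and halving: "\<And>y. norm (y - (p y + q y)) \<le> norm y / 2"
  shows "x \<in> bounded_sums M N (4 * c * norm x)"
proof -
  define xs where "xs j = ((\<lambda>y. y - (p y + q y)) ^^ j) x" for j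
  define m where "m j = p (xs j)" for j
  define n where "n j = q (xs j)" for j
  have xs_Suc: "xs (Suc j) = xs j - (m j + n j)" for j
    by (simp add: xs_def m_def n_def)
  have xs_bound: "norm (xs j) \<le> norm x * (1 / 2) ^ j" for j
  proof (induction j)
    case (Suc j)
    then show ?case
      using halving[of "xs j"] by (simp add: xs_Suc m_def n_def)
  qed (simp add: xs_def)
  have mn: "norm (m j) + norm (n j) \<le> c * norm x * (1 / 2) ^ j" for j
    using order_trans[OF pq(3)[of "xs j"] mult_left_mono[OF xs_bound[of j] \<open>c \<ge> 0\<close>]]
    by (simp add: m_def n_def mult.assoc)
  have "norm (m j) \<le> c * norm x * (1 / 2) ^ j" "norm (n j) \<le> c * norm x * (1 / 2) ^ j" for j
    using mn[of j] norm_ge_zero[of "m j"] norm_ge_zero[of "n j"] by linarith+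
  note m = closed_subspace_suminf_geometric[OF assms(1,3) pq(1)[of "xs _", folded m_def] this(1)]
    and n = closed_subspace_suminf_geometric[OF assms(2,4) pq(2)[of "xs _", folded n_def] this(2)]
  have "(\<lambda>j. norm x * (1 / 2 :: real) ^ j) \<longlonglongrightarrow> 0"
    by (intro tendsto_mult_right_zero LIMSEQ_power_zero) simp
  then have "xs \<longlonglongrightarrow> 0"
    by (rule Lim_null_comparison[rotated]) (simp add: xs_bound)
  moreover have "xs j - xs (Suc j) = m j + n j" for j
    by (simp add: xs_Suc)
  moreover have "xs 0 = x"
    by (simp add: xs_def)
  ultimately have "(\<lambda>j. m j + n j) sums x"
    using telescope_sums'[of xs 0] by simp
  moreover have "(\<lambda>j. m j + n j) sums (suminf m + suminf n)"
    using sums_add[OF summable_sums[OF m(1)] summable_sums[OF n(1)]] .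
  ultimately have "x = suminf m + suminf n"
    by (rule sums_unique2)
  moreover have "norm (suminf m) + norm (suminf n) \<le> 4 * c * norm x"
    using m(3) n(3) by simp
  ultimately show ?thesis
    unfolding bounded_sums_def using m(2) n(2) by blast
qed

lemma in_bounded_sums_of_closure:
  fixes M N :: "'a::banach set"
  assumes "closed M" "closed N" "subspace M" "subspace N" "c \<ge> 0"
    and approx: "\<And>x. x \<in> closure (bounded_sums M N (c * norm x))"
  shows "x \<in> bounded_sums M N (4 * c * norm x)"
proof -
  have "\<exists>m n. m \<in> M \<and> n \<in> N \<and> norm m + norm n \<le> c * norm y \<and> norm (y - (m + n)) \<le> norm y / 2" for y
  proof (cases "y = 0")
    case True
    then show ?thesis
      using assms(3,4) by (auto intro!: exI[of _ 0] simp: subspace_0)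
  next
    case False
    then obtain b where "b \<in> bounded_sums M N (c * norm y)" "dist b y < norm y / 2"
      using approx[of y] unfolding closure_approachable by (metis half_gt_zero zero_less_norm_iff)
    then show ?thesis
      unfolding bounded_sums_def by (force simp: dist_norm norm_minus_commute)
  qed
  then obtain p q where "\<And>y. p y \<in> M" "\<And>y. q y \<in> N" "\<And>y. norm (p y) + norm (q y) \<le> c * norm y"
    "\<And>y. norm (y - (p y + q y)) \<le> norm y / 2"
    by metis
  then show ?thesis
    by (rule in_bounded_sums_by_halving[OF assms(1-5)])
qed

lemma bounded_decomposition_closed_subspaces:
  fixes M N :: "'a::banach set"
  assumes "closed M" "closed N" "subspace M" "subspace N" "\<And>x. \<exists>m\<in>M. \<exists>n\<in>N. x = m + n"
  obtains C where "\<And>x. x \<in> bounded_sums M N (C * norm x)"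
proof -
  obtain c where "c \<ge> 0" "\<And>x. x \<in> closure (bounded_sums M N (c * norm x))"
    using in_closure_bounded_sums_linear[OF assms(3-5)] by metis
  then show thesis
    using that in_bounded_sums_of_closure[OF assms(1-4)] by blast
qed

section \<open>Complementary subspaces\<close>

lemma closed_csubspace_scaleC: "closed_csubspace M \<Longrightarrow> x \<in> M \<Longrightarrow> scaleC c x \<in> M"
  by (simp add: closed_csubspace_def csubspace_def)

lemma closed_csubspace_imp_subspace: "closed_csubspace M \<Longrightarrow> subspace M"
  unfolding closed_csubspace_def csubspace_def subspace_def by (metis scaleC_of_real)

lemma direct_sum_decompose: "direct_sum M N \<Longrightarrow> \<exists>m\<in>M. \<exists>n\<in>N. x = m + n"
  unfolding direct_sum_def by blast

lemma direct_sum_unique: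
  assumes "direct_sum M N" "subspace M" "subspace N"
    and "m \<in> M" "n \<in> N" "m' \<in> M" "n' \<in> N" "m + n = m' + n'"
  shows "m = m'" "n = n'"
proof -
  have "m - m' = n' - n"
    using assms(8) by (simp add: algebra_simps)
  moreover have "m - m' \<in> M" "n' - n \<in> N"
    using assms(2-7) by (simp_all add: subspace_diff)
  ultimately have "m - m' \<in> M \<inter> N"
    by simp
  then have "m - m' = 0"
    using assms(1) unfolding direct_sum_def by blast
  then show "m = m'"
    by simp
  then show "n = n'"
    using assms(8) by simp
qed

lemma direct_sum_norm_bound:
  fixes M N :: "'a::complex_banach set"
  assumes "closed_csubspace M" "closed_csubspace N" "direct_sum M N"
  obtains C where "\<And>m n. m \<in> M \<Longrightarrow> n \<in> N \<Longrightarrow> norm m + norm n \<le> C * norm (m + n)"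
proof -
  have sub: "subspace M" "subspace N" "closed M" "closed N"
    using assms(1,2) by (simp_all add: closed_csubspace_imp_subspace closed_csubspace_def)
  obtain C where C: "\<And>x. x \<in> bounded_sums M N (C * norm x)"
    using bounded_decomposition_closed_subspaces[OF sub(3,4,1,2) direct_sum_decompose[OF assms(3)]] by metis
  have "norm m + norm n \<le> C * norm (m + n)" if "m \<in> M" "n \<in> N" for m n
  proof -
    obtain m' n' where "m' \<in> M" "n' \<in> N" "m + n = m' + n'" "norm m' + norm n' \<le> C * norm (m + n)"
      using C[of "m + n"] unfolding bounded_sums_def by blast
    with direct_sum_unique[OF assms(3) sub(1,2) that] show ?thesis
      by metis
  qed
  then show thesis
    using that by blast
qed

lemma direct_sum_commute:
  assumes "direct_sum M N"
  shows "direct_sum N M"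
proof -
  have "\<exists>n\<in>N. \<exists>m\<in>M. x = n + m" for x
    using direct_sum_decompose[OF assms, of x] by (metis add.commute)
  then have "{x + y | x y. x \<in> N \<and> y \<in> M} = UNIV"
    by blast
  then show ?thesis
    using assms by (simp add: direct_sum_def Int_commute)
qed

lemma direct_sum_nonzero:
  fixes M N L :: "'a::complex_normed_vector set"
  assumes "UNIV \<noteq> {0::'a}" "direct_sum M N" "direct_sum M L" "N \<inter> L = {0}"
  shows "M \<noteq> {0}"
proof
  assume "M = {0}"
  then have "N = UNIV" "L = UNIV"
    using assms(2,3) unfolding direct_sum_def by auto
  then show False
    using assms(1,4) by simp
qed

lemma direct_sum_distinct:
  assumes "direct_sum M N" "M \<noteq> {0}" "N \<noteq> {0}"
  shows "M \<noteq> UNIV" "N \<noteq> UNIV" "M \<noteq> N"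
proof -
  have "M \<inter> N = {0}"
    using assms(1) by (simp add: direct_sum_def)
  then show "M \<noteq> UNIV" "N \<noteq> UNIV" "M \<noteq> N"
    using assms(2,3) by auto
qed

section \<open>Reflections along the graph of an isomorphism\<close>

lemma cblin_id: "cblin id"
  by (simp add: cblin_def bounded_linear_ident[unfolded id_def[symmetric]])

lemma cblin_comp: "cblin S \<Longrightarrow> cblin T \<Longrightarrow> cblin (S \<circ> T)"
  unfolding cblin_def using bounded_linear_compose[of S T] by (simp add: comp_def)

lemma cblin_zero: "cblin S \<Longrightarrow> S 0 = 0"
  by (simp add: cblin_def bounded_linear.linear linear_0)

locale graph_reflection =
  fixes M N :: "'a::complex_banach set" and V W :: "'a \<Rightarrow> 'a"
  assumes closed_M: "closed_csubspace M" and closed_N: "closed_csubspace N"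
    and direct: "direct_sum M N" and iso: "iso_on M N V"
    and W_sum: "\<forall>x\<in>M. \<forall>y\<in>N. W (x + y) = inv_into M V y + V x"
begin

abbreviation Vinv where "Vinv \<equiv> inv_into M V"

lemma subspace_M: "subspace M" and subspace_N: "subspace N"
  using closed_M closed_N by (simp_all add: closed_csubspace_imp_subspace)

lemma V_mem: "x \<in> M \<Longrightarrow> V x \<in> N"
  using iso by (auto simp: iso_on_def bij_betw_def)

lemma Vinv_mem: "y \<in> N \<Longrightarrow> Vinv y \<in> M"
  using iso by (auto simp: iso_on_def bij_betw_def inv_into_into)

lemma V_Vinv: "y \<in> N \<Longrightarrow> V (Vinv y) = y"
  using iso by (auto simp: iso_on_def bij_betw_def f_inv_into_f)

lemma Vinv_V: "x \<in> M \<Longrightarrow> Vinv (V x) = x"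
  using iso by (auto simp: iso_on_def bij_betw_def)

lemma V_add: "x \<in> M \<Longrightarrow> y \<in> M \<Longrightarrow> V (x + y) = V x + V y"
  using iso by (simp add: iso_on_def)

lemma V_scaleC: "x \<in> M \<Longrightarrow> V (scaleC c x) = scaleC c (V x)"
  using iso by (simp add: iso_on_def)

lemma Vinv_add: "x \<in> N \<Longrightarrow> y \<in> N \<Longrightarrow> Vinv (x + y) = Vinv x + Vinv y"
  by (metis V_Vinv V_add Vinv_V Vinv_mem subspace_M subspace_add)

lemma Vinv_scaleC: "y \<in> N \<Longrightarrow> Vinv (scaleC c y) = scaleC c (Vinv y)"
  by (metis V_Vinv V_scaleC Vinv_V Vinv_mem closed_M closed_csubspace_scaleC)

lemma V_zero: "V 0 = 0" and Vinv_zero: "Vinv 0 = 0"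
  using V_add[of 0 0] Vinv_V[of 0] subspace_0[OF subspace_M] by simp_all

lemma W_eq: "x \<in> M \<Longrightarrow> y \<in> N \<Longrightarrow> W (x + y) = Vinv y + V x"
  using W_sum by blast

lemma W_M: "x \<in> M \<Longrightarrow> W x = V x"
  using W_eq[of x 0] subspace_0[OF subspace_N] Vinv_zero by simp

lemma W_N: "y \<in> N \<Longrightarrow> W y = Vinv y"
  using W_eq[of 0 y] subspace_0[OF subspace_M] V_zero by simp

lemma W_graph: "x \<in> M \<Longrightarrow> W (x + V x) = x + V x"
  using W_eq[OF _ V_mem] Vinv_V by (simp add: add.commute)

lemma W_W: "W (W z) = z"
proof -
  obtain x y where "x \<in> M" "y \<in> N" "z = x + y"
    using direct_sum_decompose[OF direct] by blast
  then have "W (W z) = W (Vinv y + V x)"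
    by (simp add: W_eq)
  also have "\<dots> = z"
    using \<open>x \<in> M\<close> \<open>y \<in> N\<close> \<open>z = x + y\<close> by (simp add: W_eq V_mem Vinv_mem Vinv_V V_Vinv)
  finally show ?thesis .
qed

lemma image_M: "W ` M = N"
proof -
  have "W ` M = V ` M"
    using W_M by simp
  then show ?thesis
    using iso by (simp add: iso_on_def bij_betw_def)
qed

lemma image_N: "W ` N = M"
proof -
  have "W ` N = Vinv ` N"
    using W_N by simp
  then show ?thesis
    using iso bij_betw_inv_into by (auto simp: iso_on_def bij_betw_def)
qed

lemma image_graph: "W ` {x + V x | x. x \<in> M} = {x + V x | x. x \<in> M}"
  using W_graph by force

lemma W_add: "W (z + z') = W z + W z'"
proof -
  obtain x y x' y' where xy: "x \<in> M" "y \<in> N" "z = x + y" "x' \<in> M" "y' \<in> N" "z' = x' + y'"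
    using direct_sum_decompose[OF direct] by metis
  then have "W (z + z') = W ((x + x') + (y + y'))"
    by (simp add: algebra_simps)
  also have "\<dots> = W z + W z'"
    using xy subspace_M subspace_N by (simp add: W_eq subspace_add V_add Vinv_add)
  finally show ?thesis .
qed

lemma W_scaleC: "W (scaleC c z) = scaleC c (W z)"
proof -
  obtain x y where xy: "x \<in> M" "y \<in> N" "z = x + y"
    using direct_sum_decompose[OF direct] by blast
  then have "W (scaleC c z) = W (scaleC c x + scaleC c y)"
    by (simp add: scaleC_add_right)
  also have "\<dots> = scaleC c (W z)"
    using xy closed_M closed_N
    by (simp add: W_eq closed_csubspace_scaleC V_scaleC Vinv_scaleC scaleC_add_right)
  finally show ?thesis .
qed

lemma norm_W_bound: "\<exists>B. \<forall>z. norm (W z) \<le> norm z * B"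
proof -
  obtain C where C: "\<And>m n. m \<in> M \<Longrightarrow> n \<in> N \<Longrightarrow> norm m + norm n \<le> C * norm (m + n)"
    using direct_sum_norm_bound[OF closed_M closed_N direct] by metis
  obtain K where K: "\<And>x. x \<in> M \<Longrightarrow> norm (V x) \<le> \<bar>K\<bar> * norm x"
    using iso unfolding iso_on_def by (meson abs_ge_self mult_right_mono norm_ge_zero order_trans)
  obtain L where L: "\<And>y. y \<in> N \<Longrightarrow> norm (Vinv y) \<le> \<bar>L\<bar> * norm y"
    using iso unfolding iso_on_def by (meson abs_ge_self mult_right_mono norm_ge_zero order_trans)
  have "norm (W z) \<le> norm z * ((\<bar>K\<bar> + \<bar>L\<bar>) * C)" for z
  proof -
    obtain x y where xy: "x \<in> M" "y \<in> N" "z = x + y"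
      using direct_sum_decompose[OF direct] by blast
    have "norm (W z) \<le> norm (Vinv y) + norm (V x)"
      using xy by (simp add: W_eq norm_triangle_ineq)
    also have "\<dots> \<le> \<bar>L\<bar> * norm y + \<bar>K\<bar> * norm x"
      using K[OF xy(1)] L[OF xy(2)] by simp
    also have "\<dots> \<le> (\<bar>K\<bar> + \<bar>L\<bar>) * (norm x + norm y)"
      by (simp add: algebra_simps)
    also have "\<dots> \<le> (\<bar>K\<bar> + \<bar>L\<bar>) * (C * norm z)"
      using C[OF xy(1,2)] xy(3) by (simp add: mult_left_mono)
    finally show ?thesis
      by (simp add: algebra_simps)
  qed
  then show ?thesis
    by blast
qed

lemma cblin_W: "cblin W"
proof -
  have scaleR: "W (r *\<^sub>R z) = r *\<^sub>R W z" for r z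
    using W_scaleC[of "complex_of_real r" z] by (simp add: scaleC_of_real)
  obtain B where "\<And>z. norm (W z) \<le> norm z * B"
    using norm_W_bound by blast
  then have "bounded_linear W"
    by (rule bounded_linear_intro[OF W_add scaleR])
  then show ?thesis
    by (simp add: cblin_def W_scaleC)
qed

lemma W_comp_W: "W \<circ> W = id"
  by (simp add: fun_eq_iff W_W)

lemma linear_W: "linear W"
  using cblin_W by (simp add: cblin_def bounded_linear.linear)

lemma W_zero: "W 0 = 0"
  using linear_W by (rule linear_0)

lemma range_W: "range W = UNIV"
  by (metis W_W surj_def)

lemma eq_W_if_swaps_and_fixes_graph:
  assumes "linear U" "U ` M \<subseteq> N" "U ` N \<subseteq> M" "\<And>x. x \<in> M \<Longrightarrow> U (x + V x) = x + V x"
  shows "U = W"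
proof
  fix z
  have on_M: "U x = V x" and on_N: "U (V x) = x" if "x \<in> M" for x
  proof -
    have "U (V x) + U x = x + V x"
      using assms(4)[OF that] linear_add[OF assms(1)] by (simp add: add.commute)
    moreover have "U (V x) \<in> M" "U x \<in> N"
      using assms(2,3) that V_mem by blast+
    ultimately show "U x = V x" "U (V x) = x"
      using direct_sum_unique[OF direct subspace_M subspace_N _ _ that V_mem[OF that]] by blast+
  qed
  obtain x y where "x \<in> M" "y \<in> N" "z = x + y"
    using direct_sum_decompose[OF direct] by blast
  then show "U z = W z"
    using on_M[of x] on_N[of "Vinv y"] linear_add[OF assms(1)]
    by (simp add: W_eq Vinv_mem V_Vinv add.commute)
qed

end

section \<open>Collineation groups as semidirect products\<close>

lemma bij_image_inv_eq: "bij f \<Longrightarrow> f ` X = X \<Longrightarrow> inv f ` X = X"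
  by (metis bij_is_inj image_inv_f_f)

lemma Grp_Alg_iff:
  "A \<in> Grp (Alg F) \<longleftrightarrow> cblin A \<and> bij A \<and> cblin (inv A) \<and> (\<forall>M\<in>F. A ` M = M)"
proof
  assume A: "A \<in> Grp (Alg F)"
  have "A ` M = M" if "M \<in> F" for M
  proof
    show "A ` M \<subseteq> M"
      using A that by (simp add: Grp_def Alg_def)
    have "M = A ` (inv A ` M)"
      using A by (simp add: Grp_def bij_is_surj image_f_inv_f)
    also have "\<dots> \<subseteq> A ` M"
      using A that by (intro image_mono) (simp add: Grp_def Alg_def)
    finally show "M \<subseteq> A ` M" .
  qed
  then show "cblin A \<and> bij A \<and> cblin (inv A) \<and> (\<forall>M\<in>F. A ` M = M)"
    using A by (simp add: Grp_def Alg_def)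
qed (auto simp: Grp_def Alg_def bij_image_inv_eq)

lemma Col_imp_cblin_bij: "S \<in> Col F \<Longrightarrow> cblin S \<and> bij S"
  unfolding Col_def by blast

lemma Col_image_mem: "S \<in> Col F \<Longrightarrow> closed_csubspace M \<Longrightarrow> M \<in> F \<Longrightarrow> S ` M \<in> F"
  unfolding Col_def by blast

lemma Col_image_eq_iff: "S \<in> Col F \<Longrightarrow> S ` M = S ` M' \<longleftrightarrow> M = M'"
  using Col_imp_cblin_bij bij_is_inj inj_image_eq_iff by blast

lemma Col_image_trivial:
  assumes "S \<in> Col F"
  shows "S ` {0} = {0}" "S ` UNIV = UNIV"
  using Col_imp_cblin_bij[OF assms] by (simp_all add: cblin_zero bij_is_surj)

lemma Col_image_nontrivial:
  assumes "S \<in> Col F" "M \<noteq> {0}" "M \<noteq> UNIV"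
  shows "S ` M \<noteq> {0}" "S ` M \<noteq> UNIV"
  using Col_image_trivial[OF assms(1)] Col_image_eq_iff[OF assms(1), of M "{0}"]
    Col_image_eq_iff[OF assms(1), of M UNIV] assms(2,3)
  by simp_all

locale permuting_group =
  fixes F :: "'a::complex_normed_vector set set" and G :: "('a \<Rightarrow> 'a) set"
  assumes cblin: "\<And>T. T \<in> G \<Longrightarrow> cblin T"
    and id: "id \<in> G" and comp: "\<And>S T. S \<in> G \<Longrightarrow> T \<in> G \<Longrightarrow> S \<circ> T \<in> G"
    and inverse: "\<And>T. T \<in> G \<Longrightarrow> \<exists>T'\<in>G. T \<circ> T' = id \<and> T' \<circ> T = id"
    and preserves: "\<And>T M. T \<in> G \<Longrightarrow> M \<in> F \<Longrightarrow> T ` M \<in> F"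
begin

lemma bij: "T \<in> G \<Longrightarrow> bij T"
  using inverse by (metis o_bij)

lemma inv_mem: "T \<in> G \<Longrightarrow> inv T \<in> G"
  using inverse by (metis inv_unique_comp)

lemma preserves_iff: "T \<in> G \<Longrightarrow> T ` M \<in> F \<longleftrightarrow> M \<in> F"
  using preserves[OF inv_mem, of T "T ` M"] preserves[of T M] bij[of T]
  by (auto simp: bij_is_inj image_inv_f_f)

lemma subset_Col: "G \<subseteq> Col F"
  using cblin bij inv_mem preserves_iff by (auto simp: Col_def)

lemma Col_factor:
  assumes S: "S \<in> Col F" and T: "T \<in> G" "\<forall>M\<in>F. S ` M = T ` M"
  shows "S \<circ> inv T \<in> Grp (Alg F)" "S = (S \<circ> inv T) \<circ> T"
proof -
  have S': "cblin S" "bij S" "cblin (inv S)"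
    using S unfolding Col_def by blast+
  show "S = (S \<circ> inv T) \<circ> T"
    using bij[OF T(1)] by (simp add: o_assoc[symmetric] bij_is_inj)
  have "(S \<circ> inv T) ` M = M" if "M \<in> F" for M
  proof -
    have "inv T ` M \<in> F"
      using preserves[OF inv_mem[OF T(1)] that] .
    have "(S \<circ> inv T) ` M = S ` inv T ` M"
      by (simp add: image_comp)
    also have "\<dots> = T ` inv T ` M"
      using T(2) \<open>inv T ` M \<in> F\<close> by blast
    finally show ?thesis
      using bij[OF T(1)] by (simp add: bij_is_surj image_f_inv_f)
  qed
  moreover have "inv (S \<circ> inv T) = T \<circ> inv S"
    using S'(2) bij[OF T(1)] by (simp add: o_inv_distrib bij_imp_bij_inv inv_inv_eq)
  ultimately show "S \<circ> inv T \<in> Grp (Alg F)"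
    using S' cblin inv_mem T(1) bij[OF T(1)] by (auto simp: Grp_Alg_iff cblin_comp bij_comp bij_imp_bij_inv)
qed

lemma comp_mem_Col:
  assumes A: "A \<in> Grp (Alg F)" and T: "T \<in> G"
  shows "A \<circ> T \<in> Col F"
proof -
  have A': "cblin A" "bij A" "cblin (inv A)" "\<forall>M\<in>F. A ` M = M"
    using A by (simp_all add: Grp_Alg_iff)
  have AT: "(A \<circ> T) ` M = A ` T ` M" for M
    by (simp only: image_comp)
  have "(A \<circ> T) ` M \<in> F \<longleftrightarrow> M \<in> F" for M
  proof
    assume "M \<in> F"
    then show "(A \<circ> T) ` M \<in> F"
      unfolding AT using A'(4) preserves[OF T] by simp
  next
    assume AM: "(A \<circ> T) ` M \<in> F"
    then have "T ` M = inv A ` (A \<circ> T) ` M"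
      unfolding AT using A'(2) by (simp add: bij_is_inj image_inv_f_f)
    also have "\<dots> = (A \<circ> T) ` M"
      using A'(4) AM by (intro bij_image_inv_eq[OF A'(2)]) blast
    finally have "T ` M = (A \<circ> T) ` M" .
    then show "M \<in> F"
      using AM preserves_iff[OF T] by metis
  qed
  then show ?thesis
    using A' cblin[OF T] bij[OF T] inv_mem[OF T] cblin[OF inv_mem[OF T]]
    by (simp add: Col_def cblin_comp bij_comp o_inv_distrib)
qed

end

lemma semidirect_ColI:
  assumes "permuting_group F G"
    and realises: "\<And>S. S \<in> Col F \<Longrightarrow> \<exists>T\<in>G. \<forall>M\<in>F. S ` M = T ` M"
    and faithful: "\<And>T. T \<in> G \<Longrightarrow> \<forall>M\<in>F. T ` M = M \<Longrightarrow> T = id"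
  shows "semidirect_Col F G"
proof -
  interpret permuting_group F G
    by fact
  have "Col F = {A \<circ> T | A T. A \<in> Grp (Alg F) \<and> T \<in> G}"
  proof (intro set_eqI iffI)
    fix S
    assume S: "S \<in> Col F"
    then obtain T where "T \<in> G" "\<forall>M\<in>F. S ` M = T ` M"
      using realises by blast
    with Col_factor[OF S this] show "S \<in> {A \<circ> T | A T. A \<in> Grp (Alg F) \<and> T \<in> G}"
      by blast
  next
    fix S
    assume "S \<in> {A \<circ> T | A T. A \<in> Grp (Alg F) \<and> T \<in> G}"
    then show "S \<in> Col F"
      using comp_mem_Col by blast
  qed
  moreover have "Grp (Alg F) \<inter> G = {id}"
    using faithful id cblin_id by (auto simp: Grp_Alg_iff)
  ultimately show ?thesis
    using subset_Col id comp inv_mem by (simp add: semidirect_Col_def)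
qed

lemma semidirect_Col_trivial_space:
  fixes F :: "'a::complex_normed_vector set set"
  assumes "UNIV = {0::'a}" "id \<in> G"
  shows "semidirect_Col F G"
proof -
  have "x = 0" for x :: 'a
    using assms(1) by (simp add: set_eq_iff)
  then have all_id: "f = id" for f :: "'a \<Rightarrow> 'a"
    by (metis (full_types) eq_id_iff)
  have "G = {id}"
    using assms(2) all_id by blast
  moreover have "semidirect_Col F {id}"
  proof (rule semidirect_ColI)
    show "permuting_group F {id}"
      by unfold_locales (simp_all add: cblin_id)
    show "\<exists>T\<in>{id}. \<forall>M\<in>F. S ` M = T ` M" for S
      using all_id[of S] by simp
  qed simp
  ultimately show ?thesis
    by simp
qed

lemma braided_involutions_group:
  fixes s t :: "'b \<Rightarrow> 'b"
  assumes "s \<circ> s = id" "t \<circ> t = id" "s \<circ> t \<circ> s = t \<circ> s \<circ> t"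
  defines "G \<equiv> {id, s, t, s \<circ> t \<circ> s, s \<circ> t, t \<circ> s}"
  shows "\<And>f g. f \<in> G \<Longrightarrow> g \<in> G \<Longrightarrow> f \<circ> g \<in> G"
    and "\<And>f. f \<in> G \<Longrightarrow> \<exists>g\<in>G. f \<circ> g = id \<and> g \<circ> f = id"
proof -
  have rules: "s (s x) = x" "t (t x) = x" "t (s (t x)) = s (t (s x))" for x
    using pointfree_idE[OF assms(1)] pointfree_idE[OF assms(2)] fun_cong[OF assms(3)] by simp_all
  have "s \<circ> id = s" "s \<circ> s = id" "s \<circ> (s \<circ> t \<circ> s) = t \<circ> s"
    "s \<circ> (s \<circ> t) = t" "s \<circ> (t \<circ> s) = s \<circ> t \<circ> s"
    "t \<circ> id = t" "t \<circ> t = id" "t \<circ> (s \<circ> t \<circ> s) = s \<circ> t"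
    "t \<circ> (s \<circ> t) = s \<circ> t \<circ> s" "t \<circ> (t \<circ> s) = s"
    by (simp_all add: fun_eq_iff rules)
  then have s_comp: "s \<circ> g \<in> G" and t_comp: "t \<circ> g \<in> G" if "g \<in> G" for g
    using that by (auto simp: G_def)
  show "f \<circ> g \<in> G" if "f \<in> G" "g \<in> G" for f g
  proof -
    have "f = id \<or> f = s \<or> f = t \<or> f = s \<circ> t \<circ> s \<or> f = s \<circ> t \<or> f = t \<circ> s"
      using that(1) by (simp add: G_def)
    then show ?thesis
      using that(2) by (auto simp: comp_assoc s_comp t_comp)
  qed
  have "s \<circ> t \<circ> s \<circ> (s \<circ> t \<circ> s) = id" "s \<circ> t \<circ> (t \<circ> s) = id" "t \<circ> s \<circ> (s \<circ> t) = id"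
    by (simp_all add: fun_eq_iff rules)
  then show "\<exists>g\<in>G. f \<circ> g = id \<and> g \<circ> f = id" if "f \<in> G" for f
    using that assms(1,2) by (auto simp: G_def)
qed

section \<open>Three mutually complementary subspaces\<close>

locale complementary_triple =
  W1: graph_reflection M2 M3 V1 W1 + W2: graph_reflection M1 M3 V2 W2 + W3: graph_reflection M1 M2 V3 W3
  for M1 M2 M3 :: "'a::complex_banach set" and V1 V2 V3 W1 W2 W3 :: "'a \<Rightarrow> 'a" +
  assumes M1_graph: "M1 = {x + V1 x | x. x \<in> M2}"
    and M2_graph: "M2 = {x + V2 x | x. x \<in> M1}"
    and M3_graph: "M3 = {x + V3 x | x. x \<in> M1}"
begin

lemma W1_fixes: "z \<in> M1 \<Longrightarrow> W1 z = z"
  by (subst (asm) M1_graph) (auto simp: W1.W_graph)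

lemma W2_fixes: "z \<in> M2 \<Longrightarrow> W2 z = z"
  by (subst (asm) M2_graph) (auto simp: W2.W_graph)

lemmas images =
  W1.image_graph[folded M1_graph] W1.image_M W1.image_N
  W2.image_M W2.image_graph[folded M2_graph] W2.image_N
  W3.image_M W3.image_N W3.image_graph[folded M3_graph]

text \<open>The simplifier rewrites \<open>(f \<circ> g) ` A\<close> to \<open>(\<lambda>x. f (g x)) ` A\<close>, so simp calls
  below use \<open>images_comp[simplified]\<close>.\<close>

lemma images_comp:
  "(W1 \<circ> W2) ` M1 = M2" "(W1 \<circ> W2) ` M2 = M3" "(W1 \<circ> W2) ` M3 = M1"
  "(W2 \<circ> W1) ` M1 = M3" "(W2 \<circ> W1) ` M2 = M1" "(W2 \<circ> W1) ` M3 = M2"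
  "range (W1 \<circ> W2) = UNIV" "range (W2 \<circ> W1) = UNIV"
  by (simp_all only: image_comp[symmetric] images W1.range_W W2.range_W)

lemma braid: "W1 \<circ> W2 \<circ> W1 = W3" "W2 \<circ> W1 \<circ> W2 = W3"
proof -
  have char: "U = W3" if U: "linear U" "U ` M1 = M2" "U ` M2 = M1" "\<And>z. z \<in> M3 \<Longrightarrow> U z = z" for U
  proof (rule W3.eq_W_if_swaps_and_fixes_graph)
    show "U (x + V3 x) = x + V3 x" if "x \<in> M1" for x
    proof -
      have "x + V3 x \<in> M3"
        using that by (subst M3_graph) blast
      then show ?thesis
        by (rule U(4))
    qed
  qed (use U(1-3) in auto)
  have lin: "linear (W1 \<circ> W2 \<circ> W1)" "linear (W2 \<circ> W1 \<circ> W2)"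
    using W1.linear_W W2.linear_W by (simp_all add: linear_compose)
  show "W1 \<circ> W2 \<circ> W1 = W3"
  proof (rule char)
    show "(W1 \<circ> W2 \<circ> W1) z = z" if "z \<in> M3" for z
    proof -
      have "W1 z \<in> M2"
        using that W1.image_N by blast
      then show ?thesis
        by (simp add: W2_fixes W1.W_W)
    qed
  qed (simp_all only: lin image_comp[symmetric] images images_comp)
  show "W2 \<circ> W1 \<circ> W2 = W3"
  proof (rule char)
    show "(W2 \<circ> W1 \<circ> W2) z = z" if "z \<in> M3" for z
    proof -
      have "W2 z \<in> M1"
        using that W2.image_N by blast
      then show ?thesis
        by (simp add: W1_fixes W2.W_W)
    qed
  qed (simp_all only: lin image_comp[symmetric] images images_comp)
qed

lemma subspaces_distinct:
  assumes "UNIV \<noteq> {0::'a}"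
  shows "M1 \<noteq> {0}" "M2 \<noteq> {0}" "M3 \<noteq> {0}" "M1 \<noteq> UNIV" "M2 \<noteq> UNIV" "M3 \<noteq> UNIV"
    "M1 \<noteq> M2" "M1 \<noteq> M3" "M2 \<noteq> M3"
proof -
  have int: "M1 \<inter> M2 = {0}" "M1 \<inter> M3 = {0}" "M2 \<inter> M3 = {0}"
    using W1.direct W2.direct W3.direct by (simp_all add: direct_sum_def)
  show nonzero: "M1 \<noteq> {0}" "M2 \<noteq> {0}" "M3 \<noteq> {0}"
    by (fact direct_sum_nonzero[OF assms W3.direct W2.direct int(3)]
      direct_sum_nonzero[OF assms direct_sum_commute[OF W3.direct] W1.direct int(2)]
      direct_sum_nonzero[OF assms direct_sum_commute[OF W2.direct] direct_sum_commute[OF W1.direct] int(1)])+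
  show "M1 \<noteq> UNIV" "M2 \<noteq> UNIV" "M3 \<noteq> UNIV" "M1 \<noteq> M2" "M1 \<noteq> M3" "M2 \<noteq> M3"
    by (fact direct_sum_distinct[OF W3.direct nonzero(1,2)] direct_sum_distinct[OF W2.direct nonzero(1,3)]
      direct_sum_distinct[OF W1.direct nonzero(2,3)])+
qed

lemma permuting_group_pair: "permuting_group {{0}, M1, M2, UNIV} {id, W3}"
proof
  show "cblin T" if "T \<in> {id, W3}" for T
    using that cblin_id W3.cblin_W by blast
  show "S \<circ> T \<in> {id, W3}" if "S \<in> {id, W3}" "T \<in> {id, W3}" for S T
    using that by (auto simp: W3.W_comp_W)
  show "\<exists>T'\<in>{id, W3}. T \<circ> T' = id \<and> T' \<circ> T = id" if "T \<in> {id, W3}" for T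
    using that W3.W_comp_W by auto
  show "T ` M \<in> {{0}, M1, M2, UNIV}" if "T \<in> {id, W3}" "M \<in> {{0}, M1, M2, UNIV}" for T M
    using that by (elim insertE emptyE) (simp_all add: images W3.W_zero W3.range_W)
qed simp

lemma permuting_group_triple:
  "permuting_group {{0}, M1, M2, M3, UNIV} {id, W1, W2, W3, W1 \<circ> W2, W2 \<circ> W1}"
proof -
  have G: "{id, W1, W2, W3, W1 \<circ> W2, W2 \<circ> W1} = {id, W1, W2, W1 \<circ> W2 \<circ> W1, W1 \<circ> W2, W2 \<circ> W1}"
    by (simp add: braid(1))
  note S3 = braided_involutions_group[OF W1.W_comp_W W2.W_comp_W braid(1)[folded braid(2)], folded G]
  show ?thesis
  proof
    show "cblin T" if "T \<in> {id, W1, W2, W3, W1 \<circ> W2, W2 \<circ> W1}" for T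
      using that by (elim insertE emptyE) (simp_all add: cblin_id cblin_comp W1.cblin_W W2.cblin_W W3.cblin_W)
    show "T ` M \<in> {{0}, M1, M2, M3, UNIV}"
      if "T \<in> {id, W1, W2, W3, W1 \<circ> W2, W2 \<circ> W1}" "M \<in> {{0}, M1, M2, M3, UNIV}" for T M
      using that by (elim insertE emptyE)
        (simp_all add: images images_comp[simplified] W1.W_zero W2.W_zero W3.W_zero W1.range_W W2.range_W W3.range_W)
    show "S \<circ> T \<in> {id, W1, W2, W3, W1 \<circ> W2, W2 \<circ> W1}"
      if "S \<in> {id, W1, W2, W3, W1 \<circ> W2, W2 \<circ> W1}" "T \<in> {id, W1, W2, W3, W1 \<circ> W2, W2 \<circ> W1}" for S T
      by (rule S3(1)[OF that])
    show "\<exists>T'\<in>{id, W1, W2, W3, W1 \<circ> W2, W2 \<circ> W1}. T \<circ> T' = id \<and> T' \<circ> T = id"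
      if "T \<in> {id, W1, W2, W3, W1 \<circ> W2, W2 \<circ> W1}" for T
      by (rule S3(2)[OF that])
  qed simp
qed

lemma Col_pair_cases:
  assumes "UNIV \<noteq> {0::'a}" and S: "S \<in> Col {{0}, M1, M2, UNIV}"
  obtains "S ` M1 = M1" "S ` M2 = M2" | "S ` M1 = M2" "S ` M2 = M1"
proof -
  note distinct = subspaces_distinct[OF assms(1)]
  have "S ` M1 = M1 \<or> S ` M1 = M2" "S ` M2 = M1 \<or> S ` M2 = M2"
    using Col_image_mem[OF S W3.closed_M] Col_image_mem[OF S W3.closed_N]
      Col_image_nontrivial[OF S distinct(1,4)] Col_image_nontrivial[OF S distinct(2,5)]
    by simp_all
  moreover have "S ` M1 \<noteq> S ` M2"
    using Col_image_eq_iff[OF S, of M1 M2] distinct(7) by blast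
  ultimately show thesis
    using that by argo
qed

lemma Col_triple_cases:
  assumes "UNIV \<noteq> {0::'a}" and S: "S \<in> Col {{0}, M1, M2, M3, UNIV}"
  obtains "S ` M1 = M1" "S ` M2 = M2" "S ` M3 = M3" | "S ` M1 = M1" "S ` M2 = M3" "S ` M3 = M2"
    | "S ` M1 = M3" "S ` M2 = M2" "S ` M3 = M1" | "S ` M1 = M2" "S ` M2 = M1" "S ` M3 = M3"
    | "S ` M1 = M2" "S ` M2 = M3" "S ` M3 = M1" | "S ` M1 = M3" "S ` M2 = M1" "S ` M3 = M2"
proof -
  note distinct = subspaces_distinct[OF assms(1)]
  have "S ` M1 = M1 \<or> S ` M1 = M2 \<or> S ` M1 = M3" "S ` M2 = M1 \<or> S ` M2 = M2 \<or> S ` M2 = M3"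
    "S ` M3 = M1 \<or> S ` M3 = M2 \<or> S ` M3 = M3"
    using Col_image_mem[OF S W3.closed_M] Col_image_mem[OF S W3.closed_N] Col_image_mem[OF S W2.closed_N]
      Col_image_nontrivial[OF S distinct(1,4)] Col_image_nontrivial[OF S distinct(2,5)]
      Col_image_nontrivial[OF S distinct(3,6)]
    by simp_all
  moreover have "S ` M1 \<noteq> S ` M2" "S ` M1 \<noteq> S ` M3" "S ` M2 \<noteq> S ` M3"
    using Col_image_eq_iff[OF S] distinct(7-9) by blast+
  ultimately show thesis
    using that by metis
qed

lemma semidirect_Col_pair:
  assumes "UNIV \<noteq> {0::'a}"
  shows "semidirect_Col {{0}, M1, M2, UNIV} {id, W3}"
proof (rule semidirect_ColI[OF permuting_group_pair])
  show "\<exists>T\<in>{id, W3}. \<forall>M\<in>{{0}, M1, M2, UNIV}. S ` M = T ` M" if S: "S \<in> Col {{0}, M1, M2, UNIV}" for S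
    using Col_pair_cases[OF assms S] Col_image_trivial[OF S]
    by cases (simp_all add: images W3.W_zero W3.range_W)
  show "T = id" if "T \<in> {id, W3}" "\<forall>M\<in>{{0}, M1, M2, UNIV}. T ` M = M" for T
  proof -
    have "T ` M1 = M1"
      using that(2) by simp
    then show "T = id"
      using that(1) subspaces_distinct(7)[OF assms] by (elim insertE emptyE) (simp_all add: images)
  qed
qed

lemma semidirect_Col_triple:
  assumes "UNIV \<noteq> {0::'a}"
  shows "semidirect_Col {{0}, M1, M2, M3, UNIV} {id, W1, W2, W3, W1 \<circ> W2, W2 \<circ> W1}"
proof (rule semidirect_ColI[OF permuting_group_triple])
  show "\<exists>T\<in>{id, W1, W2, W3, W1 \<circ> W2, W2 \<circ> W1}. \<forall>M\<in>{{0}, M1, M2, M3, UNIV}. S ` M = T ` M"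
    if S: "S \<in> Col {{0}, M1, M2, M3, UNIV}" for S
    using Col_triple_cases[OF assms S] Col_image_trivial[OF S]
    by cases (simp_all add: images images_comp[simplified] W1.W_zero W2.W_zero W3.W_zero
      W1.range_W W2.range_W W3.range_W)
  show "T = id" if "T \<in> {id, W1, W2, W3, W1 \<circ> W2, W2 \<circ> W1}"
    "\<forall>M\<in>{{0}, M1, M2, M3, UNIV}. T ` M = M" for T
  proof -
    have "T ` M1 = M1" "T ` M2 = M2"
      using that(2) by simp_all
    then show "T = id"
      using that(1) subspaces_distinct(7-9)[OF assms]
      by (elim insertE emptyE) (simp_all add: images images_comp[simplified])
  qed
qed

end

theorem theorem5p4:
  fixes M1 M2 M3 :: "'a::complex_banach set"
    and V1 V2 V3 W1 W2 W3 :: "'a \<Rightarrow> 'a"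
  assumes "closed_csubspace M1" "closed_csubspace M2" "closed_csubspace M3"
    and "direct_sum M1 M2" "direct_sum M2 M1"
    and "direct_sum M1 M3" "direct_sum M3 M1"
    and "direct_sum M2 M3" "direct_sum M3 M2"
    and "iso_on M2 M3 V1" "iso_on M1 M3 V2" "iso_on M1 M2 V3"
    and "M1 = {x + V1 x | x. x \<in> M2}"
    and "M2 = {x + V2 x | x. x \<in> M1}"
    and "M3 = {x + V3 x | x. x \<in> M1}"
    and "\<forall>x2\<in>M2. \<forall>x3\<in>M3. W1 (x2 + x3) = inv_into M2 V1 x3 + V1 x2"
    and "\<forall>x1\<in>M1. \<forall>x3\<in>M3. W2 (x1 + x3) = inv_into M1 V2 x3 + V2 x1"
    and "\<forall>x1\<in>M1. \<forall>x2\<in>M2. W3 (x1 + x2) = inv_into M1 V3 x2 + V3 x1"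
  shows "semidirect_Col {{0}, M1, M2, UNIV} {id, W3}
       \<and> semidirect_Col {{0}, M1, M2, M3, UNIV} {id, W1, W2, W3, W1 \<circ> W2, W2 \<circ> W1}"
proof (cases "UNIV = {0::'a}")
  case True
  then show ?thesis
    by (intro conjI semidirect_Col_trivial_space) simp_all
next
  case False
  interpret complementary_triple M1 M2 M3 V1 V2 V3 W1 W2 W3
    by unfold_locales (fact assms)+
  show ?thesis
    using semidirect_Col_pair[OF False] semidirect_Col_triple[OF False] ..
qed

end
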